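(* Let $C$ be a totally bounded subset of a metric space $(X,d)$ with II-modulus of total boundedness $\gamma$, $T:C\to C$ nonexpansive with $\mathrm{Fix}(T)\ne\emptyset$, $x\in C$, $x_n:=T^nx$, and assume $(x_n)$ has approximate fixed points with $\Phi$ an approximate fixed point bound. Then for all $k\in\mathbb{N}$ and $g:\mathbb{N}\to\mathbb{N}$: (i) there exists $N\le\Sigma_0(\gamma(4k+3))$ with $d(x_i,x_j)\le\frac1{k+1}$ for all $i,j\in[N,N+g(N)]$, where $\Sigma_0(0)=0$, $\Sigma_0(n+1)=\Phi\big((4k+4)g^M(\Sigma_0(n))\big)$; (ii) there exists $N\le\tilde\Sigma_0(\gamma(8k+7))$ with $d(x_i,x_j)\le\frac1{k+1}$ and $d(x_i,Tx_i)\le\frac1{k+1}$ for all $i,j\in[N,N+g(N)]$, where $\tilde\Sigma_0(0)=0$, $\tilde\Sigma_0(n+1)=\Phi\big(\max\{2k+1,(8k+8)g^M(\tilde\Sigma_0(n))\}\big)$.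
   Context: II-modulus of total boundedness for $C$: $\gamma:\mathbb{N}\to\mathbb{N}$ such that for every $k$ and every sequence $(y_n)$ in $C$ there are $0\le i<j\le\gamma(k)$ with $d(y_i,y_j)\le\frac1{k+1}$. Nonexpansive: $d(Tx,Ty)\le d(x,y)$. An approximate fixed point bound for $(x_n)$ is a nondecreasing $\Phi:\mathbb{N}\to\mathbb{N}$ such that for every $k$ there is $N\le\Phi(k)$ with $d(x_N,Tx_N)\le\frac1{k+1}$. $g^M(n):=\max\{g(i)\mid i\le n\}$. *)

theory Defs
  imports "HOL-Analysis.Analysis"
begin

definition II_modulus :: "'a::metric_space set \<Rightarrow> (nat \<Rightarrow> nat) \<Rightarrow> bool" where
  "II_modulus C \<gamma> \<longleftrightarrow>
     (\<forall>k (y::nat \<Rightarrow> 'a). (\<forall>n. y n \<in> C) \<longrightarrow>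
        (\<exists>i j. i < j \<and> j \<le> \<gamma> k \<and> dist (y i) (y j) \<le> 1 / (real k + 1)))"

definition nonexpansive_on :: "'a::metric_space set \<Rightarrow> ('a \<Rightarrow> 'a) \<Rightarrow> bool" where
  "nonexpansive_on C T \<longleftrightarrow> (\<forall>x\<in>C. \<forall>y\<in>C. dist (T x) (T y) \<le> dist x y)"

definition afp_bound :: "('a::metric_space \<Rightarrow> 'a) \<Rightarrow> (nat \<Rightarrow> 'a) \<Rightarrow> (nat \<Rightarrow> nat) \<Rightarrow> bool" where
  "afp_bound T xs \<Phi> \<longleftrightarrow> mono \<Phi> \<and>
     (\<forall>k. \<exists>N\<le>\<Phi> k. dist (xs N) (T (xs N)) \<le> 1 / (real k + 1))"

definition maxfun :: "(nat \<Rightarrow> nat) \<Rightarrow> nat \<Rightarrow> nat" where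
  "maxfun g n = Max (g ` {..n})"

fun Sigma0 :: "(nat \<Rightarrow> nat) \<Rightarrow> (nat \<Rightarrow> nat) \<Rightarrow> nat \<Rightarrow> nat \<Rightarrow> nat" where
  "Sigma0 \<Phi> g k 0 = 0"
| "Sigma0 \<Phi> g k (Suc n) = \<Phi> ((4*k+4) * maxfun g (Sigma0 \<Phi> g k n))"

fun Sigma0' :: "(nat \<Rightarrow> nat) \<Rightarrow> (nat \<Rightarrow> nat) \<Rightarrow> nat \<Rightarrow> nat \<Rightarrow> nat" where
  "Sigma0' \<Phi> g k 0 = 0"
| "Sigma0' \<Phi> g k (Suc n) = \<Phi> (max (2*k+1) ((8*k+8) * maxfun g (Sigma0' \<Phi> g k n)))"

end

theory Submission
  imports Defs
begin

text \<open>Pick approximate fixed points N_n \<le> \<Sigma>(n+1) of the orbit, so precise that the orbit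
  moves by at most 1/(q+1) during the next g^M(\<Sigma> n) steps after N_n. The II-modulus yields
  i < j \<le> \<gamma> q with x_(N_i) and x_(N_j) at distance at most 1/(q+1); nonexpansiveness
  propagates this along both orbits. Since N_i \<le> \<Sigma> j, the window [N_i, N_i + g N_i] is
  thus shadowed by a window of length at most g^M(\<Sigma> j) starting at the approximate fixed
  point x_(N_j), and triangle inequalities finish.\<close>

lemma maxfun_ge: "i \<le> n \<Longrightarrow> g i \<le> maxfun g n"
  unfolding maxfun_def by (rule Max_ge) auto

lemma mono_maxfun: "mono (maxfun g)"
  unfolding maxfun_def by (intro monoI Max_mono) auto

lemma Sigma0_eq_funpow:
  "Sigma0 \<Phi> g k n = ((\<lambda>a. \<Phi> ((4*k+4) * maxfun g a)) ^^ n) bot"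
  by (induction n) (simp_all add: bot_nat_def)

lemma Sigma0'_eq_funpow:
  "Sigma0' \<Phi> g k n = ((\<lambda>a. \<Phi> (max (2*k+1) ((8*k+8) * maxfun g a))) ^^ n) bot"
  by (induction n) (simp_all add: bot_nat_def)

lemma mono_Sigma0: "mono \<Phi> \<Longrightarrow> mono (Sigma0 \<Phi> g k)"
  unfolding Sigma0_eq_funpow
  by (intro mono_funpow monoI) (simp add: monoD mono_maxfun)

lemma mono_Sigma0':
  assumes "mono \<Phi>" shows "mono (Sigma0' \<Phi> g k)"
  unfolding Sigma0'_eq_funpow
proof (intro mono_funpow monoI)
  fix a b :: nat
  assume "a \<le> b"
  then have "(8*k+8) * maxfun g a \<le> (8*k+8) * maxfun g b"
    by (simp add: monoD[OF mono_maxfun])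
  then show "\<Phi> (max (2*k+1) ((8*k+8) * maxfun g a)) \<le> \<Phi> (max (2*k+1) ((8*k+8) * maxfun g b))"
    by (intro monoD[OF assms] max.mono order_refl)
qed

lemma funpow_in_invariant: "T ` C \<subseteq> C \<Longrightarrow> x \<in> C \<Longrightarrow> (T ^^ n) x \<in> C"
  by (induction n) auto

lemma nonexpansive_on_funpow:
  assumes "nonexpansive_on C T" "T ` C \<subseteq> C"
  shows "nonexpansive_on C (T ^^ n)"
proof (induction n)
  case (Suc n)
  show ?case
    unfolding nonexpansive_on_def
  proof (intro ballI)
    fix u v assume "u \<in> C" "v \<in> C"
    then have "dist (T ((T ^^ n) u)) (T ((T ^^ n) v)) \<le> dist ((T ^^ n) u) ((T ^^ n) v)"
      using assms funpow_in_invariant[OF assms(2)] by (simp add: nonexpansive_on_def)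
    also have "\<dots> \<le> dist u v"
      using Suc \<open>u \<in> C\<close> \<open>v \<in> C\<close> by (simp add: nonexpansive_on_def)
    finally show "dist ((T ^^ Suc n) u) ((T ^^ Suc n) v) \<le> dist u v" by simp
  qed
qed (simp add: nonexpansive_on_def)

lemma dist_funpow_le:
  assumes "nonexpansive_on C T" "T ` C \<subseteq> C" "u \<in> C"
  shows "dist u ((T ^^ m) u) \<le> real m * dist u (T u)"
proof (induction m)
  case (Suc m)
  have "dist ((T ^^ m) u) ((T ^^ m) (T u)) \<le> dist u (T u)"
    using nonexpansive_on_funpow[OF assms(1,2)] assms by (auto simp: nonexpansive_on_def)
  then have "dist ((T ^^ m) u) ((T ^^ Suc m) u) \<le> dist u (T u)"
    by (simp add: funpow_swap1)
  with Suc dist_triangle[of u "(T ^^ Suc m) u" "(T ^^ m) u"] show ?case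
    by (simp add: algebra_simps)
qed simp

lemma dist_orbit_shift_le:
  assumes "nonexpansive_on C T" "T ` C \<subseteq> C" "x \<in> C"
  shows "dist ((T ^^ (a + m)) x) ((T ^^ (b + m)) x) \<le> dist ((T ^^ a) x) ((T ^^ b) x)"
  using nonexpansive_on_funpow[OF assms(1,2), of m] funpow_in_invariant[OF assms(2,3)]
  by (simp add: nonexpansive_on_def add.commute[of _ m] funpow_add)

lemma orbit_shadowed_by_approx_fixed_point:
  fixes x :: "'a::metric_space"
  assumes ne: "nonexpansive_on C T" and inv: "T ` C \<subseteq> C" and x: "x \<in> C"
    and II: "II_modulus C \<gamma>" and afp: "afp_bound T (\<lambda>n. (T ^^ n) x) \<Phi>"
    and s: "mono s" and s_Suc: "\<And>n. s (Suc n) = \<Phi> (e n)"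
    and e_ge_maxfun: "\<And>n. (q + 1) * maxfun g (s n) \<le> e n" and e_ge: "\<And>n. d \<le> e n"
  shows "\<exists>N N'. N \<le> s (\<gamma> q)
    \<and> (\<forall>m. dist ((T ^^ (N + m)) x) ((T ^^ (N' + m)) x) \<le> 1 / (real q + 1))
    \<and> (\<forall>m \<le> g N. dist ((T ^^ N') x) ((T ^^ (N' + m)) x) \<le> 1 / (real q + 1))
    \<and> dist ((T ^^ N') x) (T ((T ^^ N') x)) \<le> 1 / (real d + 1)"
proof -
  let ?x = "\<lambda>n. (T ^^ n) x"
  have "\<forall>r. \<exists>N. N \<le> \<Phi> r \<and> dist (?x N) (T (?x N)) \<le> 1 / (real r + 1)"
    using afp unfolding afp_bound_def by blast
  then obtain A where A: "\<forall>r. A r \<le> \<Phi> r \<and> dist (?x (A r)) (T (?x (A r))) \<le> 1 / (real r + 1)"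
    by (rule choice[THEN exE])
  define M where "M n = A (e n)" for n
  have M_le: "M n \<le> s (Suc n)" for n
    using A s_Suc by (simp add: M_def)
  have M_afp: "dist (?x (M n)) (T (?x (M n))) \<le> 1 / (real (e n) + 1)" for n
    using A by (simp add: M_def)
  obtain i j where "i < j" "j \<le> \<gamma> q" and close: "dist (?x (M i)) (?x (M j)) \<le> 1 / (real q + 1)"
    using II[unfolded II_modulus_def, rule_format, of "\<lambda>n. ?x (M n)" q]
      funpow_in_invariant[OF inv x] by blast
  have Mi_le: "M i \<le> s j"
    using M_le[of i] monoD[OF s, of "Suc i" j] \<open>i < j\<close> by simp
  have "s j \<le> s (\<gamma> q)"
    using monoD[OF s] \<open>j \<le> \<gamma> q\<close> .
  then have "M i \<le> s (\<gamma> q)"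
    using Mi_le by simp
  moreover have "dist (?x (M i + m)) (?x (M j + m)) \<le> 1 / (real q + 1)" for m
    using dist_orbit_shift_le[OF ne inv x, of "M i" m "M j"] close by simp
  moreover have "dist (?x (M j)) (?x (M j + m)) \<le> 1 / (real q + 1)" if "m \<le> g (M i)" for m
  proof -
    have m_le: "m \<le> maxfun g (s j)"
      using that maxfun_ge[OF Mi_le, of g] by simp
    have "dist (?x (M j)) (?x (M j + m)) \<le> real m * dist (?x (M j)) (T (?x (M j)))"
      using dist_funpow_le[OF ne inv funpow_in_invariant[OF inv x, of "M j"], of m]
      by (simp add: funpow_add add.commute[of "M j" m])
    also have "\<dots> \<le> real m / (real (e j) + 1)"
      using mult_left_mono[OF M_afp[of j], of "real m"] by simp
    also have "\<dots> \<le> real m / (real ((q + 1) * m) + 1)"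
    proof -
      have "(q + 1) * m \<le> e j"
        using e_ge_maxfun[of j] mult_le_mono2[OF m_le, of "q + 1"] by linarith
      then show ?thesis
        by (intro divide_left_mono mult_pos_pos) (simp_all del: of_nat_mult of_nat_add)
    qed
    also have "\<dots> \<le> 1 / (real q + 1)"
      by (simp add: divide_simps algebra_simps add_pos_nonneg)
    finally show ?thesis .
  qed
  moreover have "dist (?x (M j)) (T (?x (M j))) \<le> 1 / (real d + 1)"
  proof -
    have "1 / (real (e j) + 1) \<le> 1 / (real d + 1)"
      using e_ge[of j] by (simp add: frac_le)
    with M_afp[of j] show ?thesis by linarith
  qed
  ultimately show ?thesis by blast
qed

lemma dist_in_shadowed_window_le:
  fixes y :: "nat \<Rightarrow> 'a::metric_space"
  assumes shadow: "\<And>m. dist (y (N + m)) (y (N' + m)) \<le> \<epsilon>"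
    and near: "\<And>m. m \<le> L \<Longrightarrow> dist (y N') (y (N' + m)) \<le> \<epsilon>"
    and "N \<le> i" "i \<le> N + L" "N \<le> j" "j \<le> N + L"
  shows "dist (y i) (y j) \<le> 4 * \<epsilon>"
proof -
  obtain a b where "i = N + a" "j = N + b" "a \<le> L" "b \<le> L"
    using assms(3-6) by (metis add_le_cancel_left le_add_diff_inverse)
  then show ?thesis
    using dist_triangle[of "y i" "y j" "y (N' + a)"] dist_triangle[of "y (N' + a)" "y j" "y N'"]
      dist_triangle[of "y N'" "y j" "y (N' + b)"]
      dist_commute[of "y (N' + a)" "y N'"] dist_commute[of "y (N' + b)" "y j"]
      shadow[of a] shadow[of b] near[of a] near[of b]
    by simp
qed

lemma orbit_step_in_shadowed_window_le:
  assumes ne: "nonexpansive_on C T" and inv: "T ` C \<subseteq> C" and x: "x \<in> C"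
    and shadow: "\<And>m. dist ((T ^^ (N + m)) x) ((T ^^ (N' + m)) x) \<le> \<epsilon>"
    and near: "dist ((T ^^ N') x) (T ((T ^^ N') x)) \<le> \<delta>"
    and "N \<le> i"
  shows "dist ((T ^^ i) x) (T ((T ^^ i) x)) \<le> 2 * \<epsilon> + \<delta>"
proof -
  obtain a where i: "i = N + a"
    using \<open>N \<le> i\<close> le_Suc_ex by blast
  have "dist ((T ^^ (N' + a)) x) ((T ^^ (Suc N' + a)) x) \<le> \<delta>"
    using dist_orbit_shift_le[OF ne inv x, of N' a "Suc N'"] near by simp
  then show ?thesis
    using dist_triangle[of "(T ^^ i) x" "(T ^^ Suc i) x" "(T ^^ (N' + a)) x"]
      dist_triangle[of "(T ^^ (N' + a)) x" "(T ^^ Suc i) x" "(T ^^ (Suc N' + a)) x"]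
      dist_commute[of "(T ^^ (Suc N' + a)) x" "(T ^^ Suc i) x"]
      shadow[of a] shadow[of "Suc a"] i
    by simp
qed

lemma orbit_metastable:
  fixes x :: "'a::metric_space"
  assumes ne: "nonexpansive_on C T" and inv: "T ` C \<subseteq> C" and x: "x \<in> C"
    and "II_modulus C \<gamma>" and "afp_bound T (\<lambda>n. (T ^^ n) x) \<Phi>"
    and "mono s" and "\<And>n. s (Suc n) = \<Phi> (e n)"
    and "\<And>n. (q + 1) * maxfun g (s n) \<le> e n" and "\<And>n. d \<le> e n"
    and \<epsilon>: "4 / (real q + 1) \<le> \<epsilon>" and \<delta>: "2 / (real q + 1) + 1 / (real d + 1) \<le> \<delta>"
  shows "\<exists>N \<le> s (\<gamma> q). \<forall>i j. N \<le> i \<and> i \<le> N + g N \<and> N \<le> j \<and> j \<le> N + g N \<longrightarrow>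
    dist ((T ^^ i) x) ((T ^^ j) x) \<le> \<epsilon> \<and> dist ((T ^^ i) x) (T ((T ^^ i) x)) \<le> \<delta>"
proof -
  obtain N N' where "N \<le> s (\<gamma> q)"
    and shadow: "\<And>m. dist ((T ^^ (N + m)) x) ((T ^^ (N' + m)) x) \<le> 1 / (real q + 1)"
    and near: "\<And>m. m \<le> g N \<Longrightarrow> dist ((T ^^ N') x) ((T ^^ (N' + m)) x) \<le> 1 / (real q + 1)"
    and afp: "dist ((T ^^ N') x) (T ((T ^^ N') x)) \<le> 1 / (real d + 1)"
    using orbit_shadowed_by_approx_fixed_point[OF assms(1-9)] by blast
  have "dist ((T ^^ i) x) ((T ^^ j) x) \<le> \<epsilon> \<and> dist ((T ^^ i) x) (T ((T ^^ i) x)) \<le> \<delta>"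
    if "N \<le> i" "i \<le> N + g N" "N \<le> j" "j \<le> N + g N" for i j
    using dist_in_shadowed_window_le[of "\<lambda>n. (T ^^ n) x", OF shadow near that]
      orbit_step_in_shadowed_window_le[OF ne inv x shadow afp \<open>N \<le> i\<close>] \<epsilon> \<delta>
    by simp
  with \<open>N \<le> s (\<gamma> q)\<close> show ?thesis by blast
qed

theorem theorem7p7:
  fixes C :: "'a::metric_space set" and T :: "'a \<Rightarrow> 'a" and x :: 'a
    and \<gamma> \<Phi> g :: "nat \<Rightarrow> nat" and k :: nat
  assumes "totally_bounded C"
    and "II_modulus C \<gamma>"
    and "T ` C \<subseteq> C"
    and "nonexpansive_on C T"
    and "\<exists>p\<in>C. T p = p"
    and "x \<in> C"
    and "afp_bound T (\<lambda>n. (T ^^ n) x) \<Phi>"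
  shows "(\<exists>N\<le>Sigma0 \<Phi> g k (\<gamma> (4*k+3)).
            \<forall>i j. N \<le> i \<and> i \<le> N + g N \<and> N \<le> j \<and> j \<le> N + g N \<longrightarrow>
              dist ((T ^^ i) x) ((T ^^ j) x) \<le> 1 / (real k + 1))
       \<and> (\<exists>N\<le>Sigma0' \<Phi> g k (\<gamma> (8*k+7)).
            \<forall>i j. N \<le> i \<and> i \<le> N + g N \<and> N \<le> j \<and> j \<le> N + g N \<longrightarrow>
              dist ((T ^^ i) x) ((T ^^ j) x) \<le> 1 / (real k + 1)
              \<and> dist ((T ^^ i) x) (T ((T ^^ i) x)) \<le> 1 / (real k + 1))"
proof -
  have "mono \<Phi>"
    using assms(7) by (simp add: afp_bound_def)
  note metastable = orbit_metastable[OF assms(4,3,6,2,7)]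
  \<comment> \<open>Part (i) needs no control of the displacement: hence d = 0 and \<delta> = 2.\<close>
  have part1: "\<exists>N \<le> Sigma0 \<Phi> g k (\<gamma> (4*k+3)).
      \<forall>i j. N \<le> i \<and> i \<le> N + g N \<and> N \<le> j \<and> j \<le> N + g N \<longrightarrow>
      dist ((T ^^ i) x) ((T ^^ j) x) \<le> 1 / (real k + 1) \<and> dist ((T ^^ i) x) (T ((T ^^ i) x)) \<le> 2"
    by (rule metastable[where e="\<lambda>n. (4*k+4) * maxfun g (Sigma0 \<Phi> g k n)" and d=0])
      (simp_all add: mono_Sigma0[OF \<open>mono \<Phi>\<close>] field_simps)
  have \<delta>: "2 / (real (8*k+7) + 1) + 1 / (real (2*k+1) + 1) \<le> 1 / (real k + 1)"
  proof -
    have "2 / (real (8*k+7) + 1) + 1 / (real (2*k+1) + 1) = 3 / (4 * (real k + 1))"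
      by (simp add: divide_simps) (simp add: algebra_simps)
    also have "\<dots> \<le> 1 / (real k + 1)"
      by (simp add: divide_simps)
    finally show ?thesis .
  qed
  have part2: "\<exists>N \<le> Sigma0' \<Phi> g k (\<gamma> (8*k+7)).
      \<forall>i j. N \<le> i \<and> i \<le> N + g N \<and> N \<le> j \<and> j \<le> N + g N \<longrightarrow>
      dist ((T ^^ i) x) ((T ^^ j) x) \<le> 1 / (real k + 1)
      \<and> dist ((T ^^ i) x) (T ((T ^^ i) x)) \<le> 1 / (real k + 1)"
    by (rule metastable[where e="\<lambda>n. max (2*k+1) ((8*k+8) * maxfun g (Sigma0' \<Phi> g k n))",
          OF mono_Sigma0'[OF \<open>mono \<Phi>\<close>] _ _ _ _ \<delta>])
      (simp_all add: divide_simps le_max_iff_disj)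
  show ?thesis
    using part1 part2 by blast
qed

end
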